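(* Let $K$ be a CM field of degree $2g$ with maximal totally real subfield $F$, and let $\mathcal{O}\subseteq K$ be an order with $\mathcal{O}\cap F=\mathcal{O}_F$. Let $\{\alpha_1,\dots,\alpha_g\}$, $\{\tau_1,\dots,\tau_{2g}\}$, $\{\omega_1,\dots,\omega_{2g}\}$ be $\mathbb{Z}$-bases of $\mathcal{O}_F$, $\mathcal{O}$, $\mathcal{O}_K$ respectively. Define $b_{i,j,k}\in\mathbb{Q}$ by $\alpha_i\omega_j=\sum_{k=1}^{2g}b_{i,j,k}\tau_k$, let $M_j$ be the $2g\times g$ matrix whose $(k,i)$ entry is $b_{i,j,k}$, and let $M$ be the $(2g)^2\times g$ matrix obtained by stacking $M_1,\dots,M_{2g}$ vertically. Let $d$ be the greatest common divisor of all integers $d'$ such that $d'M$ has integer entries, and let $H\in\mathbb{Z}^{g\times g}$ be the row Hermite normal form of $dM$ (with its zero rows removed). Then $H$ is invertible, and the ideal $\mathfrak{f}^+=\mathfrak{f}\cap\mathcal{O}_F$, where $\mathfrak{f}=\{\alpha\in K:\alpha\mathcal{O}_K\subseteq\mathcal{O}\}$ is the conductor ideal of $\mathcal{O}$, equals $\mathbb{Z}\beta_1+\dots+\mathbb{Z}\beta_g$, where $(\beta_1,\dots,\beta_g)=(\alpha_1,\dots,\alpha_g)\,dH^{-1}$. In other words, the algorithm that computes $b_{i,j,k}$, $M$, $d$, $H$ and outputs this $\mathbb{Z}$-basis correctly computes $\mathfrak{f}^+$.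
   Context: A CM field is a totally imaginary quadratic extension of a totally real number field; $F$ denotes that totally real subfield. The row Hermite normal form of an integer matrix $N$ is the (unique) Hermite normal form of the lattice spanned by the rows, obtained as $UN$ for a unimodular integer matrix $U$. The ideal $\mathfrak{f}\cap\mathcal{O}_F$ uniquely identifies orders of $K$ containing $\mathcal{O}_F$. *)

theory Defs
  imports "HOL-Computational_Algebra.Polynomial" "Jordan_Normal_Form.Matrix"
begin

text \<open>Number fields are modelled as subfields of the complex numbers.\<close>

definition is_subfield :: "complex set \<Rightarrow> bool" where
  "is_subfield K \<longleftrightarrow> 0 \<in> K \<and> 1 \<in> K \<and>
     (\<forall>x\<in>K. \<forall>y\<in>K. x + y \<in> K \<and> x * y \<in> K) \<and>
     (\<forall>x\<in>K. - x \<in> K \<and> inverse x \<in> K)"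

definition int_span :: "nat \<Rightarrow> (nat \<Rightarrow> complex) \<Rightarrow> complex set" where
  "int_span n v = {\<Sum>i<n. of_int (c i) * v i | c. True}"

definition int_basis :: "nat \<Rightarrow> (nat \<Rightarrow> complex) \<Rightarrow> complex set \<Rightarrow> bool" where
  "int_basis n v A \<longleftrightarrow> (\<forall>i<n. v i \<in> A) \<and> A = int_span n v \<and>
     (\<forall>c::nat \<Rightarrow> int. (\<Sum>i<n. of_int (c i) * v i) = 0 \<longrightarrow> (\<forall>i<n. c i = 0))"

definition rat_span :: "nat \<Rightarrow> (nat \<Rightarrow> complex) \<Rightarrow> complex set" where
  "rat_span n v = {\<Sum>i<n. of_rat (c i) * v i | c. True}"

definition rat_basis :: "nat \<Rightarrow> (nat \<Rightarrow> complex) \<Rightarrow> complex set \<Rightarrow> bool" where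
  "rat_basis n v K \<longleftrightarrow> (\<forall>i<n. v i \<in> K) \<and> K = rat_span n v \<and>
     (\<forall>c::nat \<Rightarrow> rat. (\<Sum>i<n. of_rat (c i) * v i) = 0 \<longrightarrow> (\<forall>i<n. c i = 0))"

definition number_field :: "complex set \<Rightarrow> bool" where
  "number_field K \<longleftrightarrow> is_subfield K \<and> (\<exists>n v. rat_basis n v K)"

text \<open>Field embeddings of K into the complex numbers (only their values on K matter).\<close>
definition embedding :: "complex set \<Rightarrow> (complex \<Rightarrow> complex) \<Rightarrow> bool" where
  "embedding K \<sigma> \<longleftrightarrow> \<sigma> 1 = 1 \<and>
     (\<forall>x\<in>K. \<forall>y\<in>K. \<sigma> (x + y) = \<sigma> x + \<sigma> y \<and> \<sigma> (x * y) = \<sigma> x * \<sigma> y)"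

definition totally_real :: "complex set \<Rightarrow> bool" where
  "totally_real K \<longleftrightarrow> (\<forall>\<sigma>. embedding K \<sigma> \<longrightarrow> (\<forall>x\<in>K. \<sigma> x \<in> \<real>))"

definition totally_imaginary :: "complex set \<Rightarrow> bool" where
  "totally_imaginary K \<longleftrightarrow> (\<forall>\<sigma>. embedding K \<sigma> \<longrightarrow> (\<exists>x\<in>K. \<sigma> x \<notin> \<real>))"

definition quadratic_ext :: "complex set \<Rightarrow> complex set \<Rightarrow> bool" where
  "quadratic_ext F K \<longleftrightarrow> F \<subseteq> K \<and>
     (\<exists>x\<in>K. x \<notin> F \<and> K = {a + b * x | a b. a \<in> F \<and> b \<in> F})"

definition cm_field :: "complex set \<Rightarrow> bool" where
  "cm_field K \<longleftrightarrow> number_field K \<and> totally_imaginary K \<and>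
     (\<exists>F. is_subfield F \<and> totally_real F \<and> quadratic_ext F K)"

definition max_totally_real_subfield :: "complex set \<Rightarrow> complex set \<Rightarrow> bool" where
  "max_totally_real_subfield K F \<longleftrightarrow> is_subfield F \<and> F \<subseteq> K \<and> totally_real F \<and>
     (\<forall>F'. is_subfield F' \<and> F' \<subseteq> K \<and> totally_real F' \<longrightarrow> F' \<subseteq> F)"

definition ring_of_integers :: "complex set \<Rightarrow> complex set" where
  "ring_of_integers K = {x \<in> K. algebraic_int x}"

definition is_order :: "complex set \<Rightarrow> complex set \<Rightarrow> bool" where
  "is_order K R \<longleftrightarrow> R \<subseteq> K \<and> 1 \<in> R \<and>
     (\<forall>x\<in>R. \<forall>y\<in>R. x + y \<in> R \<and> x * y \<in> R \<and> - x \<in> R) \<and>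
     (\<exists>n v. int_basis n v R \<and> rat_basis n v K)"

definition conductor :: "complex set \<Rightarrow> complex set \<Rightarrow> complex set" where
  "conductor K R = {x \<in> K. \<forall>y \<in> ring_of_integers K. x * y \<in> R}"

definition is_row_HNF :: "int mat \<Rightarrow> bool" where
  "is_row_HNF A \<longleftrightarrow> (\<exists>r p. r \<le> dim_row A \<and>
     (\<forall>i. r \<le> i \<and> i < dim_row A \<longrightarrow> row A i = 0\<^sub>v (dim_col A)) \<and>
     (\<forall>i<r. p i < dim_col A \<and> A $$ (i, p i) > 0 \<and> (\<forall>j<p i. A $$ (i, j) = 0) \<and>
        (\<forall>i'<i. 0 \<le> A $$ (i', p i) \<and> A $$ (i', p i) < A $$ (i, p i))) \<and>
     (\<forall>i j. i < j \<and> j < r \<longrightarrow> p i < p j))"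

text \<open>The (2g)^2 x g matrix M obtained by stacking M_1, ..., M_{2g}; row j*2g+k of block j
  has entries b i j k.\<close>
definition stacked_matrix :: "nat \<Rightarrow> (nat \<Rightarrow> nat \<Rightarrow> nat \<Rightarrow> rat) \<Rightarrow> rat mat" where
  "stacked_matrix g b = mat ((2*g) * (2*g)) g (\<lambda>(r, i). b i (r div (2*g)) (r mod (2*g)))"

end

(* Write x in F as x = sum_l c_l alpha_l with c in Q^g. As omega generates O_K and tau is a
   Z-basis of R, x lies in the conductor iff every x omega_j has integral tau-coordinates, i.e.
   iff M c is integral; such x lie in R (as 1 is in O_K), hence in R /\ F = O_F. The unimodular
   U preserves integrality, so M c is integral iff U (d M) c = Hf c lies in d Z^((2g)^2).
   M is injective (x omega_j = 0 for all j forces x = 0), so the HNF Hf has exactly g nonzero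
   rows and an invertible top block H. Hence {c. M c integral} = d H^-1 Z^g, whose image
   under c |-> sum_l c_l alpha_l is the Z-span of the beta_i. *)
theory Submission
  imports Defs "Jordan_Normal_Form.Determinant"
begin

section \<open>Subfields and integral coordinates\<close>

lemma subfield_of_int:
  assumes "is_subfield K" shows "of_int z \<in> K"
proof -
  have nat: "of_nat n \<in> K" for n
    using assms by (induction n) (auto simp: is_subfield_def)
  show ?thesis
  proof (cases "z \<ge> 0")
    case True
    then show ?thesis using nat[of "nat z"] by simp
  next
    case False
    then have "of_int z = - (of_nat (nat (- z)) :: complex)" by simp
    then show ?thesis using assms nat[of "nat (- z)"] unfolding is_subfield_def by metis
  qed
qed

lemma subfield_of_rat:
  assumes "is_subfield K" shows "of_rat q \<in> K"
proof -
  obtain a b where "q = of_int a / of_int b" by (metis Fract_of_int_quotient Rat_cases)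
  then have "of_rat q = (of_int a :: complex) * inverse (of_int b)"
    by (simp add: divide_inverse of_rat_mult of_rat_inverse)
  then show ?thesis using assms subfield_of_int[OF assms] unfolding is_subfield_def by metis
qed

lemma subfield_sum:
  assumes "is_subfield K" and "\<And>i. i \<in> A \<Longrightarrow> f i \<in> K"
  shows "sum f A \<in> K"
  using assms(2) by (induction A rule: infinite_finite_induct) (use assms(1) in \<open>auto simp: is_subfield_def\<close>)

lemma one_in_ring_of_integers: "is_subfield K \<Longrightarrow> 1 \<in> ring_of_integers K"
  unfolding ring_of_integers_def is_subfield_def by simp

lemma exists_common_denominator:
  assumes "finite (S :: rat set)"
  shows "\<exists>D::int. D \<noteq> 0 \<and> (\<forall>q\<in>S. of_int D * q \<in> \<int>)"
  using assms
proof (induction S rule: finite_induct)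
  case empty
  show ?case by (intro exI[of _ 1]) auto
next
  case (insert x S)
  then obtain D where D: "D \<noteq> 0" "\<forall>q\<in>S. of_int D * q \<in> \<int>" by blast
  obtain a b where x: "quotient_of x = (a, b)" by (cases "quotient_of x")
  then have b: "b > 0" and x: "x = of_int a / of_int b"
    using quotient_of_denom_pos quotient_of_div by blast+
  then have "of_int (D * b) * x = of_int (D * a)" by simp
  then have "of_int (D * b) * x \<in> \<int>" by (metis Ints_of_int)
  moreover have "of_int (D * b) * q \<in> \<int>" if "q \<in> S" for q
    using D(2) that by (metis Ints_mult Ints_of_int mult.assoc mult.commute of_int_mult)
  ultimately show ?case using D b by (intro exI[of _ "D * b"]) auto
qed

lemma Ints_of_int_floor: "(y::'a::floor_ceiling) \<in> \<int> \<Longrightarrow> of_int \<lfloor>y\<rfloor> = y"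
  by (metis Ints_cases floor_of_int)

lemma Gcd_common_denominators_neq_0:
  fixes M :: "rat mat"
  shows "Gcd {d'::int. \<forall>r<dim_row M. \<forall>i<dim_col M. of_int d' * M $$ (r, i) \<in> \<int>} \<noteq> 0"
proof -
  have "finite ((\<lambda>(r, i). M $$ (r, i)) ` ({..<dim_row M} \<times> {..<dim_col M}))" by simp
  from exists_common_denominator[OF this] obtain D :: int
    where "D \<noteq> 0" "\<forall>r<dim_row M. \<forall>i<dim_col M. of_int D * M $$ (r, i) \<in> \<int>"
    by auto
  then show ?thesis by (auto simp: Gcd_0_iff)
qed

definition lin_comb :: "nat \<Rightarrow> (nat \<Rightarrow> complex) \<Rightarrow> rat vec \<Rightarrow> complex" where
  "lin_comb n v c = (\<Sum>i<n. v i * of_rat (c $ i))"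

definition integral_vec :: "'a::ring_1 vec \<Rightarrow> bool" where
  "integral_vec v \<longleftrightarrow> (\<forall>i<dim_vec v. v $ i \<in> \<int>)"

lemma lin_comb_in_subfield:
  assumes "is_subfield K" and "\<And>i. i < n \<Longrightarrow> v i \<in> K"
  shows "lin_comb n v c \<in> K"
  unfolding lin_comb_def using assms
  by (intro subfield_sum) (auto simp: is_subfield_def subfield_of_rat)

lemma int_span_eq_lin_comb_image:
  "int_span n v = lin_comb n v ` {c \<in> carrier_vec n. integral_vec c}"
proof (intro equalityI subsetI)
  fix x assume "x \<in> int_span n v"
  then obtain z where x: "x = (\<Sum>i<n. of_int (z i) * v i)" unfolding int_span_def by blast
  define c where "c = vec n (\<lambda>i. rat_of_int (z i))"
  have "x = lin_comb n v c" unfolding x lin_comb_def c_def by (intro sum.cong) auto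
  moreover have "c \<in> carrier_vec n" "integral_vec c" unfolding c_def integral_vec_def by auto
  ultimately show "x \<in> lin_comb n v ` {c \<in> carrier_vec n. integral_vec c}" by blast
next
  fix x assume "x \<in> lin_comb n v ` {c \<in> carrier_vec n. integral_vec c}"
  then obtain c where c: "c \<in> carrier_vec n" "integral_vec c" and x: "x = lin_comb n v c" by blast
  have "x = (\<Sum>i<n. of_int \<lfloor>c $ i\<rfloor> * v i)"
    unfolding x lin_comb_def
  proof (intro sum.cong refl)
    fix i assume "i \<in> {..<n}"
    then have "of_int \<lfloor>c $ i\<rfloor> = c $ i" using c by (intro Ints_of_int_floor) (auto simp: integral_vec_def)
    then show "v i * of_rat (c $ i) = of_int \<lfloor>c $ i\<rfloor> * v i" by (metis mult.commute of_rat_of_int_eq)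
  qed
  then show "x \<in> int_span n v" unfolding int_span_def by (intro CollectI exI[of _ "\<lambda>i. \<lfloor>c $ i\<rfloor>"]) simp
qed

lemma int_basis_eq_lin_comb_image:
  "int_basis n v A \<Longrightarrow> A = lin_comb n v ` {c \<in> carrier_vec n. integral_vec c}"
  by (simp add: int_basis_def int_span_eq_lin_comb_image)

lemma int_basis_lin_comb_eq_0:
  assumes v: "int_basis n v A" and c: "c \<in> carrier_vec n" and 0: "lin_comb n v c = 0"
  shows "c = 0\<^sub>v n"
proof -
  obtain D :: int where D: "D \<noteq> 0" "\<forall>q \<in> set\<^sub>v c. of_int D * q \<in> \<int>"
    using exists_common_denominator[of "set\<^sub>v c"] by (auto simp: vec_set_def)
  define z where "z i = \<lfloor>of_int D * c $ i\<rfloor>" for i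
  have z: "of_int (z i) = of_int D * c $ i" if "i < n" for i
  proof -
    have "c $ i \<in> set\<^sub>v c" using c that by (auto intro: vec_setI)
    then show ?thesis unfolding z_def using D(2) by (intro Ints_of_int_floor) blast
  qed
  have "(\<Sum>i<n. of_int (z i) * v i) = of_int D * lin_comb n v c"
    unfolding lin_comb_def sum_distrib_left
  proof (intro sum.cong refl)
    fix i assume "i \<in> {..<n}"
    then have "(of_int (z i) :: complex) = of_rat (of_int D * c $ i)" by (metis z lessThan_iff of_rat_of_int_eq)
    then show "of_int (z i) * v i = of_int D * (v i * of_rat (c $ i))" by (simp add: of_rat_mult)
  qed
  then have z0: "\<forall>i<n. z i = 0" using v 0 unfolding int_basis_def by simp
  show ?thesis
  proof (rule eq_vecI)
    fix i assume "i < dim_vec (0\<^sub>v n :: rat vec)"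
    then have "i < n" by simp
    then have "of_int D * c $ i = 0" using z z0 by (metis of_int_0)
    then show "c $ i = 0\<^sub>v n $ i" using D(1) \<open>i < n\<close> by simp
  qed (use c in simp)
qed

lemma int_basis_inj_on_lin_comb:
  assumes "int_basis n v A"
  shows "inj_on (lin_comb n v) (carrier_vec n)"
proof (rule inj_onI)
  fix a c assume a: "a \<in> carrier_vec n" and c: "c \<in> carrier_vec n" and eq: "lin_comb n v a = lin_comb n v c"
  have "lin_comb n v (a - c) = (\<Sum>i<n. v i * of_rat (a $ i) - v i * of_rat (c $ i))"
    unfolding lin_comb_def using a c by (intro sum.cong) (auto simp: of_rat_diff right_diff_distrib)
  also have "\<dots> = 0" using eq by (simp add: sum_subtractf lin_comb_def)
  finally have "a - c = 0\<^sub>v n" using int_basis_lin_comb_eq_0[OF assms] a c by simp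
  show "a = c"
  proof (rule eq_vecI)
    fix i assume "i < dim_vec c"
    then show "a $ i = c $ i" using \<open>a - c = 0\<^sub>v n\<close> a c by (metis carrier_vecD eq_iff_diff_eq_0 index_minus_vec(1) index_zero_vec(1))
  qed (use a c in simp)
qed

section \<open>Matrices acting on coordinate vectors\<close>

lemma mult_mat_vec_index_sum:
  assumes "A \<in> carrier_mat m n" and "w \<in> carrier_vec n" and "i < m"
  shows "(A *\<^sub>v w) $ i = (\<Sum>j<n. A $$ (i, j) * w $ j)"
  using assms by (simp add: scalar_prod_def atLeast0LessThan)

lemma smult_mat_mult_mat_vec:
  assumes "A \<in> carrier_mat m n" and "v \<in> carrier_vec n"
  shows "(k \<cdot>\<^sub>m A) *\<^sub>v v = k \<cdot>\<^sub>v (A *\<^sub>v (v :: 'a::comm_ring vec))"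
  using assms by (intro eq_vecI) auto

lemma lin_comb_mult_mat_vec:
  assumes A: "A \<in> carrier_mat n k" and w: "w \<in> carrier_vec k"
  shows "lin_comb n v (A *\<^sub>v w) = lin_comb k (\<lambda>i. lin_comb n v (col A i)) w"
proof -
  have "lin_comb n v (A *\<^sub>v w) = (\<Sum>l<n. v l * of_rat (\<Sum>i<k. A $$ (l, i) * w $ i))"
    unfolding lin_comb_def using mult_mat_vec_index_sum[OF A w] by simp
  also have "\<dots> = (\<Sum>l<n. \<Sum>i<k. v l * of_rat (A $$ (l, i)) * of_rat (w $ i))"
    by (simp add: of_rat_sum of_rat_mult sum_distrib_left mult.assoc)
  also have "\<dots> = lin_comb k (\<lambda>i. lin_comb n v (col A i)) w"
    using A unfolding lin_comb_def sum_distrib_right by (subst sum.swap) simp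
  finally show ?thesis .
qed

lemma int_span_eq_image_mult_mat_vec:
  assumes A: "A \<in> carrier_mat n k" and \<beta>: "\<And>i. i < k \<Longrightarrow> \<beta> i = lin_comb n v (col A i)"
  shows "int_span k \<beta> = lin_comb n v ` (\<lambda>w. A *\<^sub>v w) ` {w \<in> carrier_vec k. integral_vec w}"
proof -
  have "lin_comb k \<beta> w = lin_comb n v (A *\<^sub>v w)" if "w \<in> carrier_vec k" for w
    using lin_comb_mult_mat_vec[OF A that] \<beta> by (simp add: lin_comb_def)
  then show ?thesis by (simp add: int_span_eq_lin_comb_image image_image)
qed

lemma invertible_mat_obtain_inverse:
  assumes U: "U \<in> carrier_mat m m" and "invertible_mat U"
  obtains B where "B \<in> carrier_mat m m" "U * B = 1\<^sub>m m" "B * U = 1\<^sub>m m"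
proof -
  obtain B where B: "U * B = 1\<^sub>m (dim_row U)" "B * U = 1\<^sub>m (dim_row B)"
    using assms(2) unfolding invertible_mat_def inverts_mat_def by blast
  have "dim_col B = m" "dim_row B = m"
    using arg_cong[OF B(1), of dim_col] arg_cong[OF B(2), of dim_col] U by auto
  then show ?thesis using that[of B] B U by auto
qed

lemma invertible_map_of_int_mat:
  fixes H :: "int mat"
  assumes H: "H \<in> carrier_mat n n" and "det H \<noteq> 0"
  shows "invertible_mat (map_mat rat_of_int H)"
proof -
  have Hq: "map_mat rat_of_int H \<in> carrier_mat n n" using H by simp
  have "det (map_mat rat_of_int H) \<noteq> 0" using assms by (simp add: of_int_hom.hom_det)
  from det_non_zero_imp_unit[OF Hq this, of "()"]
  obtain B where "B \<in> carrier_mat n n" "B * map_mat rat_of_int H = 1\<^sub>m n" "map_mat rat_of_int H * B = 1\<^sub>m n"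
    unfolding Units_def ring_mat_def by auto
  then show ?thesis using Hq unfolding invertible_mat_def inverts_mat_def by auto
qed

lemma integral_vec_of_int_mult_mat_vec:
  fixes A :: "int mat" and w :: "'a::ring_1 vec"
  assumes A: "A \<in> carrier_mat m n" and w: "w \<in> carrier_vec n" and "integral_vec w"
  shows "integral_vec (map_mat of_int A *\<^sub>v w)"
  unfolding integral_vec_def
proof (intro allI impI)
  fix i assume "i < dim_vec (map_mat of_int A *\<^sub>v w)"
  then have "i < m" using A by simp
  then show "(map_mat of_int A *\<^sub>v w) $ i \<in> \<int>"
    using assms mult_mat_vec_index_sum[of "map_mat of_int A" m n w i]
    by (auto simp: integral_vec_def intro!: Ints_sum Ints_mult)
qed

lemma integral_vec_unimodular_iff:
  fixes U :: "int mat" and w :: "'a::ring_1 vec"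
  assumes U: "U \<in> carrier_mat m m" "invertible_mat U" and w: "w \<in> carrier_vec m"
  shows "integral_vec (map_mat of_int U *\<^sub>v w) \<longleftrightarrow> integral_vec w"
proof
  obtain B where B: "B \<in> carrier_mat m m" "B * U = 1\<^sub>m m"
    using invertible_mat_obtain_inverse[OF U] by blast
  have "map_mat of_int B * map_mat of_int U = (map_mat of_int (B * U) :: 'a mat)"
    by (rule of_int_hom.mat_hom_mult[OF B(1) U(1), symmetric])
  also have "\<dots> = 1\<^sub>m m" using B(2) by (simp add: of_int_hom.mat_hom_one)
  finally have "map_mat of_int B * map_mat of_int U = (1\<^sub>m m :: 'a mat)" .
  then have "w = map_mat of_int B *\<^sub>v (map_mat of_int U *\<^sub>v w)"
    using U(1) B(1) w by (simp add: assoc_mult_mat_vec[symmetric])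
  moreover assume "integral_vec (map_mat of_int U *\<^sub>v w)"
  moreover have "map_mat of_int U *\<^sub>v w \<in> carrier_vec m" using U(1) w by simp
  ultimately show "integral_vec w" using integral_vec_of_int_mult_mat_vec[OF B(1)] by metis
qed (use integral_vec_of_int_mult_mat_vec[OF U(1) w] in simp)

section \<open>Row Hermite normal forms of injective matrices\<close>

definition top_rows :: "nat \<Rightarrow> 'a mat \<Rightarrow> 'a mat" where
  "top_rows k A = mat k (dim_col A) (\<lambda>(i, j). A $$ (i, j))"

lemma top_rows_mult_mat_vec_index:
  assumes "k \<le> dim_row A" and "i < k"
  shows "(top_rows k A *\<^sub>v v) $ i = (A *\<^sub>v v) $ i"
proof -
  have "row (top_rows k A) i = row A i" "dim_row (top_rows k A) = k"
    using assms by (auto simp: top_rows_def row_def)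
  then show ?thesis using assms by simp
qed

lemma map_mat_top_rows:
  "k \<le> dim_row A \<Longrightarrow> map_mat f (top_rows k A) = top_rows k (map_mat f A)"
  by (auto simp: top_rows_def intro!: eq_matI)

lemma mult_mat_vec_eq_0_from_top_rows:
  assumes A: "A \<in> carrier_mat m n" and v: "v \<in> carrier_vec n"
    and zero: "\<And>i. k \<le> i \<Longrightarrow> i < m \<Longrightarrow> row A i = 0\<^sub>v n"
    and top: "\<And>i. i < k \<Longrightarrow> i < m \<Longrightarrow> (A *\<^sub>v v) $ i = 0"
  shows "A *\<^sub>v v = (0\<^sub>v m :: 'a::semiring_0 vec)"
proof (rule eq_vecI)
  fix i assume "i < dim_vec (0\<^sub>v m :: 'a vec)"
  then show "(A *\<^sub>v v) $ i = 0\<^sub>v m $ i"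
    using A v zero top by (cases "i < k") (auto simp: not_less)
qed (use A in simp)

lemma row_HNF_nonzero_rows:
  assumes "is_row_HNF A"
  obtains r where "r \<le> dim_col A" and "{i. i < dim_row A \<and> row A i \<noteq> 0\<^sub>v (dim_col A)} = {..<r}"
proof -
  from assms obtain r p where r: "r \<le> dim_row A"
    and zero: "\<forall>i. r \<le> i \<and> i < dim_row A \<longrightarrow> row A i = 0\<^sub>v (dim_col A)"
    and pivot: "\<forall>i<r. p i < dim_col A \<and> A $$ (i, p i) > 0"
    and mono: "\<forall>i j. i < j \<and> j < r \<longrightarrow> p i < p j"
    unfolding is_row_HNF_def by blast
  have "inj_on p {..<r}"
    using mono by (intro inj_onI) (metis lessThan_iff linorder_neqE_nat order_less_irrefl)
  then have "card {..<r} \<le> card {..<dim_col A}"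
    using pivot by (intro card_inj_on_le) auto
  moreover have "{i. i < dim_row A \<and> row A i \<noteq> 0\<^sub>v (dim_col A)} = {..<r}"
  proof (intro equalityI subsetI)
    fix i assume "i \<in> {i. i < dim_row A \<and> row A i \<noteq> 0\<^sub>v (dim_col A)}"
    then show "i \<in> {..<r}" using zero by (metis (mono_tags) lessThan_iff mem_Collect_eq not_le)
  next
    fix i assume "i \<in> {..<r}"
    then have i: "i < r" "i < dim_row A" using r by auto
    have "A $$ (i, p i) > 0" "p i < dim_col A" using pivot i by auto
    then have "row A i $ p i \<noteq> 0\<^sub>v (dim_col A) $ p i" using i by simp
    then show "i \<in> {i. i < dim_row A \<and> row A i \<noteq> 0\<^sub>v (dim_col A)}"
      using i by auto
  qed
  ultimately show ?thesis using that by simp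
qed

lemma injective_mat_nonzero_rows_ge:
  fixes A :: "'a::idom mat"
  assumes A: "A \<in> carrier_mat m n"
    and inj: "\<And>v. v \<in> carrier_vec n \<Longrightarrow> A *\<^sub>v v = 0\<^sub>v m \<Longrightarrow> v = 0\<^sub>v n"
    and zero: "\<And>i. r \<le> i \<Longrightarrow> i < m \<Longrightarrow> row A i = 0\<^sub>v n"
  shows "n \<le> r"
proof (rule ccontr)
  assume "\<not> n \<le> r"
  define c where "c i = (if i < m then row A i else 0\<^sub>v n)" for i
  define P where "P = mat\<^sub>r n n (\<lambda>i. if i = n - 1 then 0\<^sub>v n else c i)"
  have P: "P \<in> carrier_mat n n" unfolding P_def by simp
  have "det P = 0"
    unfolding P_def using \<open>\<not> n \<le> r\<close> A by (intro det_row_0) (auto simp: c_def)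
  then obtain v where v: "v \<in> carrier_vec n" "v \<noteq> 0\<^sub>v n" "P *\<^sub>v v = 0\<^sub>v n"
    using det_0_iff_vec_prod_zero[OF P] by blast
  have "A *\<^sub>v v = 0\<^sub>v m"
  proof (rule mult_mat_vec_eq_0_from_top_rows[OF A v(1) zero])
    fix i assume "i < n - 1" "i < m"
    then have "row P i = row A i" using A by (simp add: P_def c_def)
    then have "(A *\<^sub>v v) $ i = (P *\<^sub>v v) $ i" using \<open>i < n - 1\<close> \<open>i < m\<close> A P by simp
    then show "(A *\<^sub>v v) $ i = 0" using v(3) \<open>i < n - 1\<close> by simp
  qed (use \<open>\<not> n \<le> r\<close> in simp_all)
  then show False using inj v by blast
qed

lemma det_top_rows_neq_0:
  fixes A :: "'a::idom mat"
  assumes A: "A \<in> carrier_mat m n" and "n \<le> m"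
    and inj: "\<And>v. v \<in> carrier_vec n \<Longrightarrow> A *\<^sub>v v = 0\<^sub>v m \<Longrightarrow> v = 0\<^sub>v n"
    and zero: "\<And>i. n \<le> i \<Longrightarrow> i < m \<Longrightarrow> row A i = 0\<^sub>v n"
  shows "det (top_rows n A) \<noteq> 0"
proof
  have T: "top_rows n A \<in> carrier_mat n n" using A by (simp add: top_rows_def)
  assume "det (top_rows n A) = 0"
  then obtain v where v: "v \<in> carrier_vec n" "v \<noteq> 0\<^sub>v n" "top_rows n A *\<^sub>v v = 0\<^sub>v n"
    using det_0_iff_vec_prod_zero[OF T] by blast
  have "A *\<^sub>v v = 0\<^sub>v m"
  proof (rule mult_mat_vec_eq_0_from_top_rows[OF A v(1) zero])
    fix i assume "i < n"
    then show "(A *\<^sub>v v) $ i = 0"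
      using top_rows_mult_mat_vec_index[of n A i v] v(3) A \<open>n \<le> m\<close> by simp
  qed
  then show False using inj v by blast
qed

lemma row_HNF_full_column_rank:
  fixes A :: "int mat"
  assumes "is_row_HNF A" and A: "A \<in> carrier_mat m n"
    and inj: "\<And>v. v \<in> carrier_vec n \<Longrightarrow> A *\<^sub>v v = 0\<^sub>v m \<Longrightarrow> v = 0\<^sub>v n"
  shows "{i. i < m \<and> row A i \<noteq> 0\<^sub>v n} = {..<n}" (is "?nonzero = _")
    and "n \<le> m"
    and "\<And>i. n \<le> i \<Longrightarrow> i < m \<Longrightarrow> row A i = 0\<^sub>v n"
    and "det (top_rows n A) \<noteq> 0"
proof -
  obtain r where "r \<le> dim_col A" and "{i. i < dim_row A \<and> row A i \<noteq> 0\<^sub>v (dim_col A)} = {..<r}"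
    using row_HNF_nonzero_rows[OF assms(1)] by blast
  then have "r \<le> n" and r: "?nonzero = {..<r}" using A by auto
  moreover have "n \<le> r"
  proof (rule injective_mat_nonzero_rows_ge[OF A inj])
    fix i assume "r \<le> i" "i < m"
    then show "row A i = 0\<^sub>v n" using r by (metis (mono_tags) lessThan_iff mem_Collect_eq not_le)
  qed
  ultimately show nonzero: "?nonzero = {..<n}" by simp
  show "n \<le> m"
  proof (rule ccontr)
    assume "\<not> n \<le> m"
    then have "m \<in> ?nonzero" using nonzero by simp
    then show False by simp
  qed
  show zero: "row A i = 0\<^sub>v n" if "n \<le> i" "i < m" for i
  proof -
    have "i \<notin> ?nonzero" using nonzero that by simp
    then show ?thesis using that by simp
  qed
  show "det (top_rows n A) \<noteq> 0" by (rule det_top_rows_neq_0[OF A \<open>n \<le> m\<close> inj zero])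
qed

lemma unimodular_mult_injective:
  fixes M :: "rat mat" and N U :: "int mat"
  assumes M: "M \<in> carrier_mat m n" and N: "N \<in> carrier_mat m n"
    and NdM: "map_mat of_int N = of_int d \<cdot>\<^sub>m M" and d: "d \<noteq> 0"
    and U: "U \<in> carrier_mat m m" "invertible_mat U"
    and inj: "\<And>c. c \<in> carrier_vec n \<Longrightarrow> M *\<^sub>v c = 0\<^sub>v m \<Longrightarrow> c = 0\<^sub>v n"
    and v: "v \<in> carrier_vec n" and UNv: "(U * N) *\<^sub>v v = 0\<^sub>v m"
  shows "v = 0\<^sub>v n"
proof -
  obtain B where B: "B \<in> carrier_mat m m" "B * U = 1\<^sub>m m"
    using invertible_mat_obtain_inverse[OF U] by blast
  have "N *\<^sub>v v = (B * U) *\<^sub>v (N *\<^sub>v v)" using B(2) N v by simp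
  also have "\<dots> = B *\<^sub>v (U *\<^sub>v (N *\<^sub>v v))"
    by (rule assoc_mult_mat_vec) (use B(1) U(1) N v in auto)
  also have "U *\<^sub>v (N *\<^sub>v v) = (U * N) *\<^sub>v v"
    by (rule assoc_mult_mat_vec[symmetric]) (use U(1) N v in auto)
  finally have "N *\<^sub>v v = 0\<^sub>v m" using UNv B(1) by auto
  have "of_int d \<cdot>\<^sub>v (M *\<^sub>v map_vec of_int v) = (of_int d \<cdot>\<^sub>m M) *\<^sub>v map_vec of_int v"
    using smult_mat_mult_mat_vec[OF M, of "map_vec of_int v"] v by simp
  also have "\<dots> = map_vec of_int (N *\<^sub>v v)"
    unfolding NdM[symmetric] by (rule of_int_hom.mult_mat_vec_hom[OF N v, symmetric])
  finally have dMv: "of_int d \<cdot>\<^sub>v (M *\<^sub>v map_vec of_int v) = 0\<^sub>v m"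
    using \<open>N *\<^sub>v v = 0\<^sub>v m\<close> by simp
  have "M *\<^sub>v map_vec of_int v = (1 / of_int d * of_int d) \<cdot>\<^sub>v (M *\<^sub>v map_vec of_int v)"
    using d by simp
  also have "\<dots> = (1 / of_int d) \<cdot>\<^sub>v 0\<^sub>v m"
    by (simp only: smult_smult_assoc[symmetric] dMv)
  also have "\<dots> = 0\<^sub>v m" by (intro eq_vecI) auto
  finally have "M *\<^sub>v map_vec of_int v = 0\<^sub>v m" .
  then have "map_vec rat_of_int v = 0\<^sub>v n" using inj[of "map_vec rat_of_int v"] v by simp
  then show ?thesis by (intro eq_vecI) (auto dest: arg_cong[of _ _ "\<lambda>w. w $ _"])
qed

lemma integral_vec_smult_iff_top_rows:
  fixes A :: "'a::comm_ring_1 mat"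
  assumes A: "A \<in> carrier_mat m n" and "n \<le> m"
    and zero: "\<And>i. n \<le> i \<Longrightarrow> i < m \<Longrightarrow> row A i = 0\<^sub>v n" and c: "c \<in> carrier_vec n"
  shows "integral_vec (s \<cdot>\<^sub>v (A *\<^sub>v c)) \<longleftrightarrow> integral_vec (s \<cdot>\<^sub>v (top_rows n A *\<^sub>v c))"
proof -
  have entry: "(s \<cdot>\<^sub>v (A *\<^sub>v c)) $ i = (if i < n then (s \<cdot>\<^sub>v (top_rows n A *\<^sub>v c)) $ i else 0)"
    if "i < m" for i
  proof (cases "i < n")
    case True
    then show ?thesis
      using top_rows_mult_mat_vec_index[of n A i c] that A \<open>n \<le> m\<close> by (simp add: top_rows_def)
  next
    case False
    then show ?thesis using zero[of i] that A c by simp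
  qed
  show ?thesis unfolding integral_vec_def
  proof (intro iffI allI impI)
    fix i assume all: "\<forall>i<dim_vec (s \<cdot>\<^sub>v (A *\<^sub>v c)). (s \<cdot>\<^sub>v (A *\<^sub>v c)) $ i \<in> \<int>"
      and "i < dim_vec (s \<cdot>\<^sub>v (top_rows n A *\<^sub>v c))"
    then have "i < n" "i < m" using \<open>n \<le> m\<close> by (auto simp: top_rows_def)
    then show "(s \<cdot>\<^sub>v (top_rows n A *\<^sub>v c)) $ i \<in> \<int>"
      using all[rule_format, of i] entry[of i] A by simp
  next
    fix i assume all: "\<forall>i<dim_vec (s \<cdot>\<^sub>v (top_rows n A *\<^sub>v c)). (s \<cdot>\<^sub>v (top_rows n A *\<^sub>v c)) $ i \<in> \<int>"
      and "i < dim_vec (s \<cdot>\<^sub>v (A *\<^sub>v c))"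
    then have "i < m" using A by simp
    then show "(s \<cdot>\<^sub>v (A *\<^sub>v c)) $ i \<in> \<int>"
      using all[rule_format, of i] entry[of i] by (cases "i < n") (simp_all add: top_rows_def)
  qed
qed

lemma integral_vec_mult_iff_top_rows:
  fixes M :: "rat mat" and N U :: "int mat"
  assumes M: "M \<in> carrier_mat m n" and N: "N \<in> carrier_mat m n"
    and NdM: "map_mat of_int N = of_int d \<cdot>\<^sub>m M" and d: "d \<noteq> 0"
    and U: "U \<in> carrier_mat m m" "invertible_mat U" and "n \<le> m"
    and zero: "\<And>i. n \<le> i \<Longrightarrow> i < m \<Longrightarrow> row (U * N) i = 0\<^sub>v n"
    and c: "c \<in> carrier_vec n"
  shows "integral_vec (M *\<^sub>v c) \<longleftrightarrow>
    integral_vec ((1 / of_int d) \<cdot>\<^sub>v (map_mat of_int (top_rows n (U * N)) *\<^sub>v c))"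
proof -
  let ?Uq = "map_mat rat_of_int U" and ?Hq = "map_mat rat_of_int (U * N)"
  have Hq: "?Hq \<in> carrier_mat m n" using U(1) N by simp
  have "?Hq *\<^sub>v c = (?Uq * map_mat of_int N) *\<^sub>v c"
    by (simp only: of_int_hom.mat_hom_mult[OF U(1) N])
  also have "\<dots> = ?Uq *\<^sub>v (map_mat of_int N *\<^sub>v c)"
    by (rule assoc_mult_mat_vec) (use U(1) N c in auto)
  also have "\<dots> = of_int d \<cdot>\<^sub>v (?Uq *\<^sub>v (M *\<^sub>v c))"
    using M U(1) c by (simp add: NdM smult_mat_mult_mat_vec mult_mat_vec)
  finally have "?Uq *\<^sub>v (M *\<^sub>v c) = (1 / of_int d) \<cdot>\<^sub>v (?Hq *\<^sub>v c)"
    using d by (simp add: smult_smult_assoc)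
  then have "integral_vec (M *\<^sub>v c) \<longleftrightarrow> integral_vec ((1 / of_int d) \<cdot>\<^sub>v (?Hq *\<^sub>v c))"
    using integral_vec_unimodular_iff[OF U, of "M *\<^sub>v c"] M c by simp
  also have "\<dots> \<longleftrightarrow> integral_vec ((1 / of_int d) \<cdot>\<^sub>v (top_rows n ?Hq *\<^sub>v c))"
  proof (rule integral_vec_smult_iff_top_rows[OF Hq \<open>n \<le> m\<close> _ c])
    fix i assume i: "n \<le> i" "i < m"
    have "row ?Hq i = map_vec of_int (row (U * N) i)"
      using i U(1) N by (intro eq_vecI) auto
    then show "row ?Hq i = 0\<^sub>v n" using zero[OF i] by simp
  qed
  also have "top_rows n ?Hq = map_mat of_int (top_rows n (U * N))"
    using map_mat_top_rows[of n "U * N" rat_of_int] \<open>n \<le> m\<close> U(1) N by simp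
  finally show ?thesis .
qed

lemma integral_scaled_preimage_eq_image:
  fixes H Hinv :: "rat mat"
  assumes H: "H \<in> carrier_mat n n" and Hinv: "Hinv \<in> carrier_mat n n"
    and inv: "H * Hinv = 1\<^sub>m n" "Hinv * H = 1\<^sub>m n" and d: "d \<noteq> 0"
  shows "{c \<in> carrier_vec n. integral_vec ((1 / of_int d) \<cdot>\<^sub>v (H *\<^sub>v c))}
    = (\<lambda>w. (of_int d \<cdot>\<^sub>m Hinv) *\<^sub>v w) ` {w \<in> carrier_vec n. integral_vec w}"
proof -
  have recover_c: "(of_int d \<cdot>\<^sub>m Hinv) *\<^sub>v ((1 / of_int d) \<cdot>\<^sub>v (H *\<^sub>v c)) = c" if "c \<in> carrier_vec n" for c
  proof -
    have "(of_int d \<cdot>\<^sub>m Hinv) *\<^sub>v ((1 / of_int d) \<cdot>\<^sub>v (H *\<^sub>v c)) = (Hinv * H) *\<^sub>v c"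
      using H Hinv that d by (simp add: smult_mat_mult_mat_vec mult_mat_vec smult_smult_assoc)
    then show ?thesis using inv(2) that by simp
  qed
  have recover_w: "(1 / of_int d) \<cdot>\<^sub>v (H *\<^sub>v ((of_int d \<cdot>\<^sub>m Hinv) *\<^sub>v w)) = w" if "w \<in> carrier_vec n" for w
  proof -
    have "(1 / of_int d) \<cdot>\<^sub>v (H *\<^sub>v ((of_int d \<cdot>\<^sub>m Hinv) *\<^sub>v w)) = (H * Hinv) *\<^sub>v w"
      using H Hinv that d by (simp add: smult_mat_mult_mat_vec mult_mat_vec smult_smult_assoc)
    then show ?thesis using inv(1) that by simp
  qed
  show ?thesis
  proof (intro equalityI subsetI)
    fix c assume "c \<in> {c \<in> carrier_vec n. integral_vec ((1 / of_int d) \<cdot>\<^sub>v (H *\<^sub>v c))}"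
    then show "c \<in> (\<lambda>w. (of_int d \<cdot>\<^sub>m Hinv) *\<^sub>v w) ` {w \<in> carrier_vec n. integral_vec w}"
      using recover_c[of c] H by (intro image_eqI[of _ _ "(1 / of_int d) \<cdot>\<^sub>v (H *\<^sub>v c)"]) auto
  next
    fix c assume "c \<in> (\<lambda>w. (of_int d \<cdot>\<^sub>m Hinv) *\<^sub>v w) ` {w \<in> carrier_vec n. integral_vec w}"
    then show "c \<in> {c \<in> carrier_vec n. integral_vec ((1 / of_int d) \<cdot>\<^sub>v (H *\<^sub>v c))}"
      using recover_w smult_carrier_mat[OF Hinv] by (auto intro: mult_mat_vec_carrier)
  qed
qed

lemma integral_preimage_via_row_HNF:
  fixes M :: "rat mat" and N U Hf H :: "int mat"
  assumes M: "M \<in> carrier_mat m n"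
    and M_inj: "\<And>c. c \<in> carrier_vec n \<Longrightarrow> M *\<^sub>v c = 0\<^sub>v m \<Longrightarrow> c = 0\<^sub>v n"
    and N: "N \<in> carrier_mat m n" and NdM: "map_mat of_int N = of_int d \<cdot>\<^sub>m M" and d: "d \<noteq> 0"
    and U: "U \<in> carrier_mat m m" "invertible_mat U"
    and Hf: "Hf = U * N" "is_row_HNF Hf"
    and H: "H = mat (card {i. i < dim_row Hf \<and> row Hf i \<noteq> 0\<^sub>v (dim_col Hf)}) (dim_col Hf)
                   (\<lambda>(i, j). Hf $$ (i, j))"
  shows "H \<in> carrier_mat n n" and "invertible_mat (map_mat rat_of_int H)"
    and "\<And>c. c \<in> carrier_vec n \<Longrightarrow>
      integral_vec (M *\<^sub>v c) \<longleftrightarrow> integral_vec ((1 / of_int d) \<cdot>\<^sub>v (map_mat of_int H *\<^sub>v c))"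
proof -
  have Hfc: "Hf \<in> carrier_mat m n" using Hf(1) U(1) N by simp
  have Hf_inj: "v = 0\<^sub>v n" if "v \<in> carrier_vec n" "Hf *\<^sub>v v = 0\<^sub>v m" for v
    using unimodular_mult_injective[OF M N NdM d U M_inj] that Hf(1) by blast
  note HNF = row_HNF_full_column_rank[OF Hf(2) Hfc Hf_inj]
  have "{i. i < dim_row Hf \<and> row Hf i \<noteq> 0\<^sub>v (dim_col Hf)} = {..<n}" using HNF(1) Hfc by simp
  then have H_top: "H = top_rows n Hf" unfolding H top_rows_def using Hfc by simp
  then show Hc: "H \<in> carrier_mat n n" using Hfc by (simp add: top_rows_def)
  show "invertible_mat (map_mat rat_of_int H)"
    using invertible_map_of_int_mat[OF Hc] HNF(4) H_top by simp
  show "integral_vec (M *\<^sub>v c) \<longleftrightarrow> integral_vec ((1 / of_int d) \<cdot>\<^sub>v (map_mat of_int H *\<^sub>v c))"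
    if "c \<in> carrier_vec n" for c
    using integral_vec_mult_iff_top_rows[OF M N NdM d U HNF(2) _ that] HNF(3) Hf(1) H_top by simp
qed

section \<open>The stacked matrix and the conductor\<close>

lemma mult_add_less_square: "j < n \<Longrightarrow> k < n \<Longrightarrow> j * n + k < n * (n::nat)"
proof -
  assume "j < n" "k < n"
  then have "j * n + k < Suc j * n" by simp
  also have "\<dots> \<le> n * n" using \<open>j < n\<close> by (intro mult_le_mono1) simp
  finally show ?thesis .
qed

lemma stacked_matrix_carrier: "stacked_matrix g b \<in> carrier_mat ((2*g) * (2*g)) g"
  by (simp add: stacked_matrix_def)

definition vec_block :: "nat \<Rightarrow> nat \<Rightarrow> 'a vec \<Rightarrow> 'a vec" where
  "vec_block n j w = vec n (\<lambda>k. w $ (j * n + k))"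

lemma stacked_matrix_mult_vec_index:
  assumes c: "c \<in> carrier_vec g" and "j < 2*g" "k < 2*g"
  shows "(stacked_matrix g b *\<^sub>v c) $ (j * (2*g) + k) = (\<Sum>l<g. b l j k * c $ l)"
proof -
  have s: "j * (2*g) + k < (2*g) * (2*g)" using assms by (intro mult_add_less_square)
  show ?thesis
    using mult_mat_vec_index_sum[OF stacked_matrix_carrier c s] s assms
    by (simp add: stacked_matrix_def)
qed

lemma lin_comb_mult_int_basis:
  assumes b: "\<forall>i<g. \<forall>j<2*g. \<alpha> i * \<omega> j = (\<Sum>k<2*g. of_rat (b i j k) * \<tau> k)"
    and c: "c \<in> carrier_vec g" and j: "j < 2*g"
  shows "lin_comb g \<alpha> c * \<omega> j = lin_comb (2*g) \<tau> (vec_block (2*g) j (stacked_matrix g b *\<^sub>v c))"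
proof -
  have "lin_comb g \<alpha> c * \<omega> j = (\<Sum>l<g. (\<alpha> l * \<omega> j) * of_rat (c $ l))"
    unfolding lin_comb_def sum_distrib_right by (simp add: ac_simps)
  also have "\<dots> = (\<Sum>l<g. (\<Sum>k<2*g. of_rat (b l j k) * \<tau> k) * of_rat (c $ l))"
    using b j by simp
  also have "\<dots> = (\<Sum>k<2*g. \<tau> k * of_rat (\<Sum>l<g. b l j k * c $ l))"
    unfolding sum_distrib_right sum_distrib_left of_rat_sum of_rat_mult
    by (subst sum.swap) (simp add: ac_simps)
  also have "\<dots> = lin_comb (2*g) \<tau> (vec_block (2*g) j (stacked_matrix g b *\<^sub>v c))"
    unfolding lin_comb_def vec_block_def using c j by (simp add: stacked_matrix_mult_vec_index)
  finally show ?thesis .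
qed

lemma integral_vec_iff_vec_blocks:
  assumes u: "u \<in> carrier_vec (n * n)"
  shows "integral_vec u \<longleftrightarrow> (\<forall>j<n. integral_vec (vec_block n j u))"
proof (intro iffI allI impI)
  fix j assume "integral_vec u" "j < n"
  then show "integral_vec (vec_block n j u)"
    using u mult_add_less_square[OF \<open>j < n\<close>] by (auto simp: integral_vec_def vec_block_def)
next
  assume blocks: "\<forall>j<n. integral_vec (vec_block n j u)"
  show "integral_vec u" unfolding integral_vec_def
  proof (intro allI impI)
    fix s assume "s < dim_vec u"
    then have s: "s < n * n" using u by simp
    then have "0 < n" by (cases "n = 0") auto
    define j k where "j = s div n" and "k = s mod n"
    have jk: "j < n" "k < n"
      using s \<open>0 < n\<close> by (simp_all add: j_def k_def less_mult_imp_div_less)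
    have "s = j * n + k" unfolding j_def k_def by (metis div_mult_mod_eq)
    then have "u $ s = vec_block n j u $ k" using jk(2) by (simp add: vec_block_def)
    moreover have "integral_vec (vec_block n j u)" using blocks jk(1) by blast
    ultimately show "u $ s \<in> \<int>" using jk(2) by (simp add: integral_vec_def vec_block_def)
  qed
qed

lemma lin_comb_mult_lin_comb_int_basis:
  assumes b: "\<forall>i<g. \<forall>j<2*g. \<alpha> i * \<omega> j = (\<Sum>k<2*g. of_rat (b i j k) * \<tau> k)"
    and c: "c \<in> carrier_vec g"
  shows "lin_comb g \<alpha> c * lin_comb (2*g) \<omega> e = lin_comb (2*g) \<tau>
    (vec (2*g) (\<lambda>k. \<Sum>j<2*g. e $ j * vec_block (2*g) j (stacked_matrix g b *\<^sub>v c) $ k))"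
    (is "?x * _ = lin_comb _ _ (vec _ (\<lambda>k. \<Sum>j<_. e $ j * ?block j $ k))")
proof -
  have "?x * lin_comb (2*g) \<omega> e = (\<Sum>j<2*g. of_rat (e $ j) * (?x * \<omega> j))"
    unfolding lin_comb_def sum_distrib_left by (simp add: ac_simps)
  also have "\<dots> = (\<Sum>j<2*g. \<Sum>k<2*g. of_rat (e $ j) * (\<tau> k * of_rat (?block j $ k)))"
    using lin_comb_mult_int_basis[OF b c] by (simp add: lin_comb_def sum_distrib_left)
  also have "\<dots> = lin_comb (2*g) \<tau> (vec (2*g) (\<lambda>k. \<Sum>j<2*g. e $ j * ?block j $ k))"
    unfolding lin_comb_def by (subst sum.swap) (simp add: of_rat_sum of_rat_mult sum_distrib_left ac_simps)
  finally show ?thesis .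
qed

lemma lin_comb_in_conductor_iff:
  assumes K: "is_subfield K" and \<alpha>: "\<And>l. l < g \<Longrightarrow> \<alpha> l \<in> K"
    and \<tau>: "int_basis (2*g) \<tau> R" and \<omega>: "int_basis (2*g) \<omega> (ring_of_integers K)"
    and b: "\<forall>i<g. \<forall>j<2*g. \<alpha> i * \<omega> j = (\<Sum>k<2*g. of_rat (b i j k) * \<tau> k)"
    and c: "c \<in> carrier_vec g"
  shows "lin_comb g \<alpha> c \<in> conductor K R \<longleftrightarrow> integral_vec (stacked_matrix g b *\<^sub>v c)"
    (is "?x \<in> _ \<longleftrightarrow> integral_vec ?u")
proof -
  have u: "?u \<in> carrier_vec ((2*g) * (2*g))" using stacked_matrix_carrier[of g b] c by simp
  have R: "R = lin_comb (2*g) \<tau> ` {e \<in> carrier_vec (2*g). integral_vec e}"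
    by (rule int_basis_eq_lin_comb_image[OF \<tau>])
  show ?thesis unfolding integral_vec_iff_vec_blocks[OF u]
  proof (intro iffI allI impI)
    fix j assume "?x \<in> conductor K R" "j < 2*g"
    then have "?x * \<omega> j \<in> R" using \<omega> unfolding conductor_def int_basis_def by blast
    then obtain e where e: "e \<in> carrier_vec (2*g)" "integral_vec e" "?x * \<omega> j = lin_comb (2*g) \<tau> e"
      using R by blast
    have "lin_comb (2*g) \<tau> (vec_block (2*g) j ?u) = lin_comb (2*g) \<tau> e"
      using lin_comb_mult_int_basis[OF b c \<open>j < 2*g\<close>] e(3) by simp
    moreover have "vec_block (2*g) j ?u \<in> carrier_vec (2*g)" by (simp add: vec_block_def)
    ultimately have "vec_block (2*g) j ?u = e"
      by (rule inj_onD[OF int_basis_inj_on_lin_comb[OF \<tau>] _ _ e(1)])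
    then show "integral_vec (vec_block (2*g) j ?u)" using e(2) by (simp only:)
  next
    assume blocks: "\<forall>j<2*g. integral_vec (vec_block (2*g) j ?u)"
    have "?x * y \<in> R" if "y \<in> ring_of_integers K" for y
    proof -
      have "y \<in> lin_comb (2*g) \<omega> ` {e \<in> carrier_vec (2*g). integral_vec e}"
        using that int_basis_eq_lin_comb_image[OF \<omega>] by simp
      then obtain e where e: "e \<in> carrier_vec (2*g)" "integral_vec e" and y: "y = lin_comb (2*g) \<omega> e"
        by blast
      have "integral_vec (vec (2*g) (\<lambda>k. \<Sum>j<2*g. e $ j * vec_block (2*g) j ?u $ k))"
        unfolding integral_vec_def
      proof (intro allI impI)
        fix k assume "k < dim_vec (vec (2*g) (\<lambda>k. \<Sum>j<2*g. e $ j * vec_block (2*g) j ?u $ k))"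
        then have k: "k < 2*g" by simp
        have "e $ j \<in> \<int>" if "j < 2*g" for j
          using e(1,2) that unfolding integral_vec_def by simp
        moreover have "vec_block (2*g) j ?u $ k \<in> \<int>" if "j < 2*g" for j
          using blocks[rule_format, OF that] k unfolding integral_vec_def vec_block_def by simp
        ultimately show "vec (2*g) (\<lambda>k. \<Sum>j<2*g. e $ j * vec_block (2*g) j ?u $ k) $ k \<in> \<int>"
          using k by (auto intro!: Ints_sum Ints_mult)
      qed
      then show ?thesis
        unfolding y lin_comb_mult_lin_comb_int_basis[OF b c] R by (intro imageI) simp
    qed
    moreover have "?x \<in> K" using lin_comb_in_subfield[OF K \<alpha>] .
    ultimately show "?x \<in> conductor K R" unfolding conductor_def by blast
  qed
qed

lemma stacked_matrix_mult_vec_eq_0: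
  assumes \<alpha>: "int_basis g \<alpha> A" and one: "1 \<in> int_span (2*g) \<omega>"
    and b: "\<forall>i<g. \<forall>j<2*g. \<alpha> i * \<omega> j = (\<Sum>k<2*g. of_rat (b i j k) * \<tau> k)"
    and c: "c \<in> carrier_vec g" and Mc: "stacked_matrix g b *\<^sub>v c = 0\<^sub>v ((2*g) * (2*g))"
  shows "c = 0\<^sub>v g"
proof (rule int_basis_lin_comb_eq_0[OF \<alpha> c])
  have zero: "lin_comb g \<alpha> c * \<omega> j = 0" if "j < 2*g" for j
  proof -
    have "vec_block (2*g) j (stacked_matrix g b *\<^sub>v c) = 0\<^sub>v (2*g)"
      unfolding Mc vec_block_def using mult_add_less_square[OF that] by (intro eq_vecI) auto
    then show ?thesis using lin_comb_mult_int_basis[OF b c that] by (simp add: lin_comb_def)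
  qed
  obtain e where e: "1 = (\<Sum>j<2*g. of_int (e j) * \<omega> j)"
    using one unfolding int_span_def by blast
  have "lin_comb g \<alpha> c = lin_comb g \<alpha> c * (\<Sum>j<2*g. of_int (e j) * \<omega> j)"
    by (simp flip: e)
  also have "\<dots> = (\<Sum>j<2*g. of_int (e j) * (lin_comb g \<alpha> c * \<omega> j))"
    by (simp add: sum_distrib_left ac_simps)
  finally show "lin_comb g \<alpha> c = 0" using zero by simp
qed

lemma conductor_inter_ring_of_integers_eq:
  assumes K: "is_subfield K" and F: "is_subfield F" "F \<subseteq> K"
    and OF: "R \<inter> F = ring_of_integers F"
    and \<alpha>: "int_basis g \<alpha> (ring_of_integers F)"
    and \<tau>: "int_basis (2*g) \<tau> R" and \<omega>: "int_basis (2*g) \<omega> (ring_of_integers K)"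
    and b: "\<forall>i<g. \<forall>j<2*g. \<alpha> i * \<omega> j = (\<Sum>k<2*g. of_rat (b i j k) * \<tau> k)"
  shows "conductor K R \<inter> ring_of_integers F
    = lin_comb g \<alpha> ` {c \<in> carrier_vec g. integral_vec (stacked_matrix g b *\<^sub>v c)}"
proof -
  have \<alpha>F: "\<alpha> l \<in> F" if "l < g" for l
    using \<alpha> that unfolding int_basis_def ring_of_integers_def by blast
  then have \<alpha>K: "\<alpha> l \<in> K" if "l < g" for l using F(2) that by blast
  note criterion = lin_comb_in_conductor_iff[OF K \<alpha>K \<tau> \<omega> b]
  have "conductor K R \<subseteq> R"
    using one_in_ring_of_integers[OF K] unfolding conductor_def by force
  moreover have "lin_comb g \<alpha> c \<in> F" for c using lin_comb_in_subfield[OF F(1) \<alpha>F] .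
  ultimately have conductor_in_OF: "lin_comb g \<alpha> c \<in> ring_of_integers F"
    if "lin_comb g \<alpha> c \<in> conductor K R" for c
    using OF that by blast
  show ?thesis
  proof (intro equalityI subsetI)
    fix x assume x: "x \<in> conductor K R \<inter> ring_of_integers F"
    then obtain c where "c \<in> carrier_vec g" "x = lin_comb g \<alpha> c"
      using int_basis_eq_lin_comb_image[OF \<alpha>] by blast
    then show "x \<in> lin_comb g \<alpha> ` {c \<in> carrier_vec g. integral_vec (stacked_matrix g b *\<^sub>v c)}"
      using criterion x by blast
  next
    fix x assume "x \<in> lin_comb g \<alpha> ` {c \<in> carrier_vec g. integral_vec (stacked_matrix g b *\<^sub>v c)}"
    then obtain c where "c \<in> carrier_vec g" "integral_vec (stacked_matrix g b *\<^sub>v c)" "x = lin_comb g \<alpha> c"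
      by blast
    then show "x \<in> conductor K R \<inter> ring_of_integers F" using criterion conductor_in_OF by blast
  qed
qed

theorem mainTheorem1:
  fixes K F R :: "complex set" and g :: nat
    and \<alpha> \<tau> \<omega> :: "nat \<Rightarrow> complex"
    and b :: "nat \<Rightarrow> nat \<Rightarrow> nat \<Rightarrow> rat"
    and M :: "rat mat" and d :: int and N U Hf H :: "int mat"
  assumes cm: "cm_field K"
    and deg: "\<exists>v. rat_basis (2*g) v K"
    and F: "max_totally_real_subfield K F"
    and ord: "is_order K R"
    and OF: "R \<inter> F = ring_of_integers F"
    and \<alpha>: "int_basis g \<alpha> (ring_of_integers F)"
    and \<tau>: "int_basis (2*g) \<tau> R"
    and \<omega>: "int_basis (2*g) \<omega> (ring_of_integers K)"
    and b: "\<forall>i<g. \<forall>j<2*g. \<alpha> i * \<omega> j = (\<Sum>k<2*g. of_rat (b i j k) * \<tau> k)"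
    and M: "M = stacked_matrix g b"
    and d: "d = Gcd {d'::int. \<forall>r<dim_row M. \<forall>i<dim_col M. of_int d' * M $$ (r, i) \<in> \<int>}"
    and N: "N \<in> carrier_mat (dim_row M) (dim_col M)"
    and NdM: "map_mat rat_of_int N = of_int d \<cdot>\<^sub>m M"
    and U: "U \<in> carrier_mat (dim_row M) (dim_row M)" "invertible_mat U"
    and Hf: "Hf = U * N" "is_row_HNF Hf"
    and H: "H = mat (card {i. i < dim_row Hf \<and> row Hf i \<noteq> 0\<^sub>v (dim_col Hf)}) (dim_col Hf)
                   (\<lambda>(i, j). Hf $$ (i, j))"
  shows "H \<in> carrier_mat g g \<and> invertible_mat (map_mat rat_of_int H) \<and>
    (\<forall>Hinv. Hinv \<in> carrier_mat g g \<and> map_mat rat_of_int H * Hinv = 1\<^sub>m g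
        \<and> Hinv * map_mat rat_of_int H = 1\<^sub>m g \<longrightarrow>
      conductor K R \<inter> ring_of_integers F =
        int_span g (\<lambda>i. \<Sum>l<g. \<alpha> l * of_rat (of_int d * Hinv $$ (l, i))))"
proof -
  have K: "is_subfield K" using cm unfolding cm_field_def number_field_def by blast
  have F': "is_subfield F" "F \<subseteq> K" using F unfolding max_totally_real_subfield_def by blast+
  have Mc: "M \<in> carrier_mat ((2*g) * (2*g)) g" using M stacked_matrix_carrier by simp
  have "1 \<in> int_span (2*g) \<omega>" using \<omega> one_in_ring_of_integers[OF K] by (simp add: int_basis_def)
  note M_inj = stacked_matrix_mult_vec_eq_0[OF \<alpha> this b, folded M]
  have d0: "d \<noteq> 0" unfolding d by (rule Gcd_common_denominators_neq_0)
  have N': "N \<in> carrier_mat ((2*g) * (2*g)) g" and U': "U \<in> carrier_mat ((2*g) * (2*g)) ((2*g) * (2*g))"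
    using N U(1) Mc by auto
  note HNF = integral_preimage_via_row_HNF[OF Mc _ N' NdM d0 U' U(2) Hf H]
  have Hc: "H \<in> carrier_mat g g" and Hq_inv: "invertible_mat (map_mat rat_of_int H)"
    and lattice: "\<And>c. c \<in> carrier_vec g \<Longrightarrow>
      integral_vec (M *\<^sub>v c) \<longleftrightarrow> integral_vec ((1 / of_int d) \<cdot>\<^sub>v (map_mat of_int H *\<^sub>v c))"
    using HNF M_inj by blast+
  show ?thesis
  proof (intro conjI allI impI Hc Hq_inv)
    fix Hinv assume Hinv: "Hinv \<in> carrier_mat g g \<and> map_mat rat_of_int H * Hinv = 1\<^sub>m g
        \<and> Hinv * map_mat rat_of_int H = 1\<^sub>m g"
    have "conductor K R \<inter> ring_of_integers F
        = lin_comb g \<alpha> ` {c \<in> carrier_vec g. integral_vec (M *\<^sub>v c)}"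
      using conductor_inter_ring_of_integers_eq[OF K F' OF \<alpha> \<tau> \<omega> b] M by simp
    also have "{c \<in> carrier_vec g. integral_vec (M *\<^sub>v c)}
        = {c \<in> carrier_vec g. integral_vec ((1 / of_int d) \<cdot>\<^sub>v (map_mat of_int H *\<^sub>v c))}"
      using lattice by blast
    also have "\<dots> = (\<lambda>w. (of_int d \<cdot>\<^sub>m Hinv) *\<^sub>v w) ` {w \<in> carrier_vec g. integral_vec w}"
      using Hinv Hc d0 by (intro integral_scaled_preimage_eq_image) auto
    also have "lin_comb g \<alpha> ` \<dots> = int_span g (\<lambda>i. \<Sum>l<g. \<alpha> l * of_rat (of_int d * Hinv $$ (l, i)))"
      using Hinv by (intro int_span_eq_image_mult_mat_vec[symmetric]) (auto simp: lin_comb_def)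
    finally show "conductor K R \<inter> ring_of_integers F
        = int_span g (\<lambda>i. \<Sum>l<g. \<alpha> l * of_rat (of_int d * Hinv $$ (l, i)))" .
  qed
qed

end
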